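(* The SWAP operation $U^{SWAP}=|00\rangle\langle00|+|01\rangle\langle10|+|10\rangle\langle01|+|11\rangle\langle11|$ is not probabilistically implementable (with any nonzero probability) over the $2$-bridge ladder network, i.e. the $(2,2)$-cluster network.
   Context: The $(2,2)$-cluster network has nodes $v_{1,1},v_{2,1}$ (inputs), $v_{1,2},v_{2,2}$ (outputs) and edges $\{v_{1,1},v_{2,1}\},\{v_{1,2},v_{2,2}\},\{v_{1,1},v_{1,2}\},\{v_{2,1},v_{2,2}\}$, each carrying an EPR pair $(|00\rangle+|11\rangle)/\sqrt2$ with one qubit at each endpoint (resource state $|\Phi\rangle_{\mathcal R}$). Input qubit $i$ is at $v_{i,1}$, output qubit $i$ at $v_{i,2}$. $U$ is probabilistically implementable if there exist a stochastic LOCC map $\Gamma$ (finite-round local operations at single nodes and classical communication, with post-selection on a subset of outcomes) and $p>0$ with $\Gamma(|\psi\rangle\langle\psi|\otimes|\Phi\rangle\langle\Phi|_{\mathcal R})=pU|\psi\rangle\langle\psi|U^\dagger$ for all pure input states $|\psi\rangle$. *)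

theory Defs
  imports Complex_Main
begin

text \<open>Nodes are numbered 0 = v_{1,1}, 1 = v_{2,1}, 2 = v_{1,2}, 3 = v_{2,2}.
  A global state of the network lives in the tensor product of the local spaces
  C^{d_0} (x) C^{d_1} (x) C^{d_2} (x) C^{d_3}; basis vectors are indexed by
  multi-indices (lists of length 4, k-th entry < d_k).  A global operator from
  local dimensions ds to ds' is a function (row multi-index, column multi-index)
  to complex numbers; a local operator is a matrix as function nat => nat => complex.\<close>

type_synonym gop = "nat list \<Rightarrow> nat list \<Rightarrow> complex"
type_synonym lop = "nat \<Rightarrow> nat \<Rightarrow> complex"

definition idx :: "nat list \<Rightarrow> nat list set" where
  "idx ds = {i. length i = length ds \<and> (\<forall>k<length ds. i ! k < ds ! k)}"

definition id_op :: gop where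
  "id_op i j = (if i = j then 1 else 0)"

text \<open>Left-multiplying a global operator K by the local operator A acting at node k
  (whose current local dimension is d); the identity acts on all other nodes.\<close>
definition apply_local :: "nat \<Rightarrow> nat \<Rightarrow> lop \<Rightarrow> gop \<Rightarrow> gop" where
  "apply_local k d A K = (\<lambda>i j. \<Sum>a<d. A (i ! k) a * K (i[k := a]) j)"

definition is_instrument :: "nat \<Rightarrow> nat \<Rightarrow> lop list \<Rightarrow> bool" where
  "is_instrument d d' As \<longleftrightarrow>
     (\<forall>a<d. \<forall>b<d. (\<Sum>A\<leftarrow>As. \<Sum>r<d'. cnj (A r a) * A r b) = (if a = b then 1 else 0))"

text \<open>Finite-round LOCC protocols, as the list of leaves of the protocol tree.
  Each leaf records the current local dimensions and the (product of Kraus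
  operators) global operator accumulated along its branch.  A protocol is built by
  repeatedly choosing a leaf and letting one single node perform a local
  instrument there (chosen depending on the whole classical history, i.e. the
  branch), which splits the leaf into one leaf per outcome.\<close>
inductive locc :: "nat list \<Rightarrow> (nat list \<times> gop) list \<Rightarrow> bool" for ds0 where
  init: "locc ds0 [(ds0, id_op)]"
| refine: "\<lbrakk> locc ds0 L; n < length L; L ! n = (ds, K); k < length ds;
             is_instrument (ds ! k) d' As \<rbrakk>
           \<Longrightarrow> locc ds0 (take n L @ map (\<lambda>A. (ds[k := d'], apply_local k (ds ! k) A K)) As
                          @ drop (Suc n) L)"

definition apply_vec :: "nat list \<Rightarrow> gop \<Rightarrow> (nat list \<Rightarrow> complex) \<Rightarrow> nat list \<Rightarrow> complex" where
  "apply_vec ds K v i = (\<Sum>j\<in>idx ds. K i j * v j)"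

text \<open>Local systems:
  v_{1,1} (node 0): input qubit 1, half of EPR on {v11,v21}, half of EPR on {v11,v12};
     local index 4*in1 + 2*e_{11,21} + e_{11,12}, dimension 8.
  v_{2,1} (node 1): input qubit 2, half of EPR on {v11,v21}, half of EPR on {v21,v22};
     local index 4*in2 + 2*e_{11,21} + e_{21,22}, dimension 8.
  v_{1,2} (node 2): half of EPR on {v12,v22}, half of EPR on {v11,v12};
     local index 2*e_{12,22} + e_{11,12}, dimension 4.
  v_{2,2} (node 3): half of EPR on {v12,v22}, half of EPR on {v21,v22};
     local index 2*e_{12,22} + e_{21,22}, dimension 4.\<close>

definition cluster_dims :: "nat list" where
  "cluster_dims = [8, 8, 4, 4]"

definition epr :: "nat \<Rightarrow> nat \<Rightarrow> complex" where
  "epr a b = (if a = b then complex_of_real (1 / sqrt 2) else 0)"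

text \<open>The vector |psi> (x) |Phi>_R, where psi is a two-qubit vector, psi q1 q2.\<close>
definition init_vec :: "(nat \<Rightarrow> nat \<Rightarrow> complex) \<Rightarrow> nat list \<Rightarrow> complex" where
  "init_vec \<psi> i =
     \<psi> (i ! 0 div 4) (i ! 1 div 4)
     * epr ((i ! 0 div 2) mod 2) ((i ! 1 div 2) mod 2)
     * epr (i ! 2 div 2) (i ! 3 div 2)
     * epr (i ! 0 mod 2) (i ! 2 mod 2)
     * epr (i ! 1 mod 2) (i ! 3 mod 2)"

text \<open>Two-qubit unitaries as 4x4 matrices in the basis |q1 q2> = index 2*q1+q2.\<close>
definition apply_U :: "lop \<Rightarrow> (nat \<Rightarrow> nat \<Rightarrow> complex) \<Rightarrow> nat \<Rightarrow> nat \<Rightarrow> complex" where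
  "apply_U U \<psi> a1 a2 = (\<Sum>b1<2. \<Sum>b2<2. U (2 * a1 + a2) (2 * b1 + b2) * \<psi> b1 b2)"

text \<open>Probabilistic implementability: a finite-round LOCC protocol, post-selected on
  a subset T of its leaves.  Every post-selected leaf ends with local dimensions
  [1,1,2,2]: nodes v_{1,1}, v_{2,1} hold nothing (all their systems traced out,
  which is itself a local operation) and v_{i,2} holds exactly output qubit i.
  The resulting map Gamma(rho) = sum_{n in T} K_n rho K_n^dagger must equal
  p U |psi><psi| U^dagger on every pure (normalized) input |psi>.\<close>
definition prob_implementable :: "lop \<Rightarrow> bool" where
  "prob_implementable U \<longleftrightarrow>
     (\<exists>L T (p::real).
        locc cluster_dims L \<and> T \<subseteq> {..<length L} \<and>
        (\<forall>n\<in>T. fst (L ! n) = [1, 1, 2, 2]) \<and> p > 0 \<and>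
        (\<forall>\<psi>. (\<Sum>a<2. \<Sum>b<2. (cmod (\<psi> a b))\<^sup>2) = 1 \<longrightarrow>
           (\<forall>a1<2. \<forall>a2<2. \<forall>b1<2. \<forall>b2<2.
              (\<Sum>n\<in>T. apply_vec cluster_dims (snd (L ! n)) (init_vec \<psi>) [0, 0, a1, a2]
                      * cnj (apply_vec cluster_dims (snd (L ! n)) (init_vec \<psi>) [0, 0, b1, b2]))
              = complex_of_real p * apply_U U \<psi> a1 a2 * cnj (apply_U U \<psi> b1 b2))))"

definition U_SWAP :: lop where
  "U_SWAP r c = (if (r, c) \<in> {(0, 0), (1, 2), (2, 1), (3, 3)} then 1 else 0)"

end

theory Submission
  imports Defs
begin

text \<open>Every branch of a finite-round LOCC protocol applies a tensor product of local operators, one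
  per node. On the resource state the EPR pairs glue the four local operators into a ring
  v11 - v21 - v22 - v12 - v11 of tensors with bond dimension 2, so each post-selected branch acts on
  the input as a ring contraction. Since the post-selected map is p times the pure map SWAP, some
  branch is itself a nonzero multiple of SWAP. But no such ring contracts to SWAP: a nonzero
  combination of the two input slices of the tensor at v21 is a singular, hence rank-one, 2x2 matrix.
  Cutting the ring there leaves a product R W S of 2x2 matrices, where W is the slice of the tensor at
  v12 for a fixed output value. As this product must be a scalar matrix for both output values, the
  two slices of W are proportional, which contradicts SWAP sending input 2 to output 1.\<close>

section \<open>2x2 complex matrices\<close>

lemma sum_lessThan_2: "(\<Sum>i<(2::nat). f i) = f 0 + f 1"
  by (simp add: numeral_2_eq_2)

definition det2 :: "(nat \<Rightarrow> nat \<Rightarrow> complex) \<Rightarrow> complex" where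
  "det2 A = A 0 0 * A 1 1 - A 0 1 * A 1 0"

definition mmult2 :: "(nat \<Rightarrow> nat \<Rightarrow> complex) \<Rightarrow> (nat \<Rightarrow> nat \<Rightarrow> complex) \<Rightarrow> nat \<Rightarrow> nat \<Rightarrow> complex" where
  "mmult2 A B r s = (\<Sum>t<2. A r t * B t s)"

lemma det2_mmult2: "det2 (mmult2 A B) = det2 A * det2 B"
  by (simp add: det2_def mmult2_def sum_lessThan_2 algebra_simps)

lemma mmult2_eq_0_cancel_left:
  assumes "det2 A \<noteq> 0" and "\<forall>r<2. \<forall>s<2. mmult2 A B r s = 0" and "r < 2" "s < 2"
  shows "B r s = 0"
proof -
  have eqs: "A 0 0 * B 0 s + A 0 1 * B 1 s = 0" "A 1 0 * B 0 s + A 1 1 * B 1 s = 0"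
    using assms(2,4) by (auto simp: mmult2_def sum_lessThan_2)
  have "det2 A * B 0 s = A 1 1 * (A 0 0 * B 0 s + A 0 1 * B 1 s) - A 0 1 * (A 1 0 * B 0 s + A 1 1 * B 1 s)"
    by (simp add: det2_def algebra_simps)
  with eqs assms(1) have "B 0 s = 0"
    by simp
  moreover have "det2 A * B 1 s = A 0 0 * (A 1 0 * B 0 s + A 1 1 * B 1 s) - A 1 0 * (A 0 0 * B 0 s + A 0 1 * B 1 s)"
    by (simp add: det2_def algebra_simps)
  with eqs assms(1) have "B 1 s = 0"
    by simp
  ultimately show ?thesis
    using less_2_cases[OF assms(3)] by auto
qed

lemma mmult2_eq_0_cancel_right:
  assumes "det2 B \<noteq> 0" and "\<forall>r<2. \<forall>s<2. mmult2 A B r s = 0" and "r < 2" "s < 2"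
  shows "A r s = 0"
proof -
  have eqs: "A r 0 * B 0 0 + A r 1 * B 1 0 = 0" "A r 0 * B 0 1 + A r 1 * B 1 1 = 0"
    using assms(2,3) by (auto simp: mmult2_def sum_lessThan_2)
  have "det2 B * A r 0 = B 1 1 * (A r 0 * B 0 0 + A r 1 * B 1 0) - B 1 0 * (A r 0 * B 0 1 + A r 1 * B 1 1)"
    by (simp add: det2_def algebra_simps)
  with eqs assms(1) have "A r 0 = 0"
    by simp
  moreover have "det2 B * A r 1 = B 0 0 * (A r 0 * B 0 1 + A r 1 * B 1 1) - B 0 1 * (A r 0 * B 0 0 + A r 1 * B 1 0)"
    by (simp add: det2_def algebra_simps)
  with eqs assms(1) have "A r 1 = 0"
    by simp
  ultimately show ?thesis
    using less_2_cases[OF assms(4)] by auto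
qed

lemma det2_eq_0_imp_rank_one:
  assumes "det2 Y = 0"
  obtains u v where "\<forall>r<2. \<forall>s<2. Y r s = u r * v s"
proof (cases "Y 0 0 = 0")
  case False
  with assms have "Y 1 1 = Y 1 0 / Y 0 0 * Y 0 1"
    by (simp add: det2_def field_simps)
  with False show ?thesis
    by (intro that[of "\<lambda>r. if r = 0 then 1 else Y 1 0 / Y 0 0" "\<lambda>s. Y 0 s"])
      (auto dest!: less_2_cases)
next
  case Y00: True
  show ?thesis
  proof (cases "Y 0 1 = 0")
    case False
    with Y00 assms have "Y 1 0 = 0"
      by (simp add: det2_def)
    with Y00 show ?thesis
      by (intro that[of "\<lambda>r. Y r 1" "\<lambda>s. if s = 0 then 0 else 1"]) (auto dest!: less_2_cases)
  next
    case True
    with Y00 show ?thesis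
      by (intro that[of "\<lambda>r. if r = 0 then 0 else 1" "\<lambda>s. Y 1 s"]) (auto dest!: less_2_cases)
  qed
qed

lemma binary_quadratic_form_has_nontrivial_zero:
  fixes a b c :: complex
  obtains x y where "x \<noteq> 0 \<or> y \<noteq> 0" and "x\<^sup>2 * a + x * y * b + y\<^sup>2 * c = 0"
proof (cases "a = 0")
  case True
  then show ?thesis
    by (intro that[of 1 0]) simp_all
next
  case False
  define s where "s = csqrt (b\<^sup>2 - 4 * a * c)"
  have "((s - b) / (2 * a))\<^sup>2 * a + (s - b) / (2 * a) * 1 * b + 1\<^sup>2 * c
      = (s\<^sup>2 - b\<^sup>2 + 4 * a * c) / (4 * a)"
    using False by (simp add: field_simps power2_eq_square)
  also have "\<dots> = 0"
    by (simp add: s_def)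
  finally show ?thesis
    by (intro that[of "(s - b) / (2 * a)" 1]) simp_all
qed

section \<open>Rings of four tensors\<close>

definition ring_contraction ::
  "(nat \<Rightarrow> nat \<Rightarrow> nat \<Rightarrow> complex) \<Rightarrow> (nat \<Rightarrow> nat \<Rightarrow> nat \<Rightarrow> complex) \<Rightarrow>
   (nat \<Rightarrow> nat \<Rightarrow> nat \<Rightarrow> complex) \<Rightarrow> (nat \<Rightarrow> nat \<Rightarrow> nat \<Rightarrow> complex) \<Rightarrow>
   nat \<Rightarrow> nat \<Rightarrow> nat \<Rightarrow> nat \<Rightarrow> complex" where
  "ring_contraction x y z w j m k n =
     (\<Sum>a<2. \<Sum>b<2. \<Sum>c<2. \<Sum>d<2. x j c a * y m a d * z k d b * w n b c)"

lemma ring_contraction_rank_one_cut: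
  assumes "\<forall>a<2. \<forall>d<2. y m a d = u a * v d"
  shows "ring_contraction x y z w j m k n =
    mmult2 (\<lambda>k b. \<Sum>d<2. v d * z k d b) (mmult2 (w n) (\<lambda>c j. \<Sum>a<2. x j c a * u a)) k j"
  using assms by (simp add: ring_contraction_def mmult2_def sum_lessThan_2 algebra_simps)

lemma mmult2_sandwich_scalar_imp_proportional:
  assumes W0: "\<And>k j. k < 2 \<Longrightarrow> j < 2 \<Longrightarrow> mmult2 R (mmult2 W0 S) k j = (if j = k then c0 else 0)"
    and W1: "\<And>k j. k < 2 \<Longrightarrow> j < 2 \<Longrightarrow> mmult2 R (mmult2 W1 S) k j = (if j = k then c1 else 0)"
    and nontrivial: "c0 \<noteq> 0 \<or> c1 \<noteq> 0"
    and "b < 2" "c < 2"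
  shows "c1 * W0 b c = c0 * W1 b c"
proof -
  define W_ker where "W_ker = (\<lambda>b c. c1 * W0 b c - c0 * W1 b c)"
  have ker: "mmult2 R (mmult2 W_ker S) k j = 0" if "k < 2" "j < 2" for k j
  proof -
    have "mmult2 R (mmult2 W_ker S) k j
        = c1 * mmult2 R (mmult2 W0 S) k j - c0 * mmult2 R (mmult2 W1 S) k j"
      by (simp add: W_ker_def mmult2_def sum_lessThan_2 algebra_simps)
    then show ?thesis
      using W0 W1 that by simp
  qed
  obtain \<gamma> \<delta> where "\<gamma> * c0 + \<delta> * c1 = 1"
  proof (cases "c0 = 0")
    case True
    with nontrivial that[of 0 "inverse c1"] show ?thesis
      by simp
  next
    case False
    with that[of "inverse c0" 0] show ?thesis
      by simp
  qed
  define W_inv where "W_inv = (\<lambda>b c. \<gamma> * W0 b c + \<delta> * W1 b c)"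
  have "mmult2 R (mmult2 W_inv S) k j = (if j = k then 1 else 0)" if "k < 2" "j < 2" for k j
  proof -
    have "mmult2 R (mmult2 W_inv S) k j
        = \<gamma> * mmult2 R (mmult2 W0 S) k j + \<delta> * mmult2 R (mmult2 W1 S) k j"
      by (simp add: W_inv_def mmult2_def sum_lessThan_2 algebra_simps)
    then show ?thesis
      using W0 W1 that \<open>\<gamma> * c0 + \<delta> * c1 = 1\<close> by simp
  qed
  then have "det2 (mmult2 R (mmult2 W_inv S)) = 1"
    by (simp add: det2_def)
  then have "det2 R \<noteq> 0" "det2 S \<noteq> 0"
    by (auto simp: det2_mmult2)
  have "mmult2 W_ker S b' c' = 0" if "b' < 2" "c' < 2" for b' c'
    using mmult2_eq_0_cancel_left[OF \<open>det2 R \<noteq> 0\<close>] ker that by blast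
  then have "W_ker b c = 0"
    using mmult2_eq_0_cancel_right[OF \<open>det2 S \<noteq> 0\<close>] \<open>b < 2\<close> \<open>c < 2\<close> by blast
  then show ?thesis
    by (simp add: W_ker_def)
qed

lemma ring_contraction_not_swap:
  assumes swap: "\<And>j m k n. j < 2 \<Longrightarrow> m < 2 \<Longrightarrow> k < 2 \<Longrightarrow> n < 2 \<Longrightarrow>
    ring_contraction x y z w j m k n = (if j = k \<and> m = n then lam else 0)"
  shows "lam = 0"
proof (rule ccontr)
  assume "lam \<noteq> 0"
  \<comment> \<open>det2 of a combination of the slices y 0 and y 1 is a binary quadratic form in the coefficients.\<close>
  obtain \<alpha> \<beta> where nontrivial: "\<alpha> \<noteq> 0 \<or> \<beta> \<noteq> 0"
    and "\<alpha>\<^sup>2 * det2 (y 0) + \<alpha> * \<beta> * (y 0 0 0 * y 1 1 1 + y 1 0 0 * y 0 1 1 - y 0 0 1 * y 1 1 0 - y 1 0 1 * y 0 1 0)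
           + \<beta>\<^sup>2 * det2 (y 1) = 0"
    by (rule binary_quadratic_form_has_nontrivial_zero)
  then have "det2 (\<lambda>a d. \<alpha> * y 0 a d + \<beta> * y 1 a d) = 0"
    by (simp add: det2_def algebra_simps power2_eq_square)
  then obtain u v where uv: "\<forall>a<2. \<forall>d<2. \<alpha> * y 0 a d + \<beta> * y 1 a d = u a * v d"
    by (rule det2_eq_0_imp_rank_one)
  define r where "r = (\<lambda>k b. \<Sum>d<2. v d * z k d b)"
  define s where "s = (\<lambda>c j. \<Sum>a<2. x j c a * u a)"
  have cut: "mmult2 r (mmult2 (w n) s) k j = (if j = k then lam * (if n = 0 then \<alpha> else \<beta>) else 0)"
    if "k < 2" "j < 2" "n < 2" for j k n
  proof -
    have "mmult2 r (mmult2 (w n) s) k j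
        = ring_contraction x (\<lambda>_ a d. \<alpha> * y 0 a d + \<beta> * y 1 a d) z w j 0 k n"
      unfolding r_def s_def by (rule ring_contraction_rank_one_cut[symmetric]) (use uv in simp)
    also have "\<dots> = \<alpha> * ring_contraction x y z w j 0 k n + \<beta> * ring_contraction x y z w j 1 k n"
      by (simp add: ring_contraction_def sum_lessThan_2 algebra_simps)
    finally show ?thesis
      using swap[OF \<open>j < 2\<close> _ \<open>k < 2\<close> \<open>n < 2\<close>] less_2_cases[OF \<open>n < 2\<close>] by auto
  qed
  have "lam * \<beta> * w 0 b c = lam * \<alpha> * w 1 b c" if "b < 2" "c < 2" for b c
    using mmult2_sandwich_scalar_imp_proportional[of r "w 0" s "lam * \<alpha>" "w 1" "lam * \<beta>" b c]
      cut[of _ _ 0] cut[of _ _ 1] nontrivial \<open>lam \<noteq> 0\<close> that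
    by (simp add: mult.commute mult.left_commute)
  then have "\<beta> * w 0 b c - \<alpha> * w 1 b c = 0" if "b < 2" "c < 2" for b c
    using \<open>lam \<noteq> 0\<close> that by (simp add: mult.assoc)
  then have "ring_contraction x y z (\<lambda>_ b c. \<beta> * w 0 b c - \<alpha> * w 1 b c) 0 m 0 0 = 0" for m
    unfolding ring_contraction_def by (simp only: sum_lessThan_2) simp
  moreover have "ring_contraction x y z (\<lambda>_ b c. \<beta> * w 0 b c - \<alpha> * w 1 b c) 0 m 0 0
      = \<beta> * ring_contraction x y z w 0 m 0 0 - \<alpha> * ring_contraction x y z w 0 m 0 1" for m
    by (simp add: ring_contraction_def sum_lessThan_2 algebra_simps)
  ultimately have "\<beta> * ring_contraction x y z w 0 m 0 0 = \<alpha> * ring_contraction x y z w 0 m 0 1" for m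
    by simp
  from this[of 0] this[of 1] have "\<beta> * lam = 0" "\<alpha> * lam = 0"
    using swap[of 0 0 0 0] swap[of 0 0 0 1] swap[of 0 1 0 0] swap[of 0 1 0 1] by simp_all
  with nontrivial \<open>lam \<noteq> 0\<close> show False
    by simp
qed

section \<open>LOCC branches are product operators\<close>

definition product_op :: "(nat \<Rightarrow> lop) \<Rightarrow> gop" where
  "product_op M i j = (\<Prod>k<length i. M k (i ! k) (j ! k))"

definition is_product_op :: "nat \<Rightarrow> gop \<Rightarrow> bool" where
  "is_product_op N K \<longleftrightarrow> (\<exists>M. \<forall>i j. length i = N \<longrightarrow> length j = N \<longrightarrow> K i j = product_op M i j)"

lemma is_product_op_id_op: "is_product_op N id_op"
proof -
  have "id_op i j = product_op (\<lambda>_ a b. if a = b then 1 else 0) i j"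
    if "length i = N" "length j = N" for i j
  proof (cases "i = j")
    case True
    then show ?thesis
      by (simp add: id_op_def product_op_def)
  next
    case False
    with that obtain k where "k < length i" "i ! k \<noteq> j ! k"
      by (metis list_eq_iff_nth_eq)
    with False show ?thesis
      by (auto simp: id_op_def product_op_def prod_zero_iff)
  qed
  then show ?thesis
    unfolding is_product_op_def by blast
qed

lemma apply_local_product_op:
  assumes K: "\<forall>i j. length i = N \<longrightarrow> length j = N \<longrightarrow> K i j = product_op M i j"
    and i: "length i = N" and j: "length j = N" and k: "k < N"
  shows "apply_local k d A K i j = product_op (M(k := (\<lambda>r c. \<Sum>a<d. A r a * M k a c))) i j"
proof -
  let ?rest = "\<Prod>l\<in>{..<N} - {k}. M l (i ! l) (j ! l)"
  have split: "(\<Prod>l<N. f l) = f k * (\<Prod>l\<in>{..<N} - {k}. f l)" for f :: "nat \<Rightarrow> complex"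
    using k by (simp add: prod.remove)
  have "(\<Prod>l\<in>{..<N} - {k}. M l (i[k := a] ! l) (j ! l)) = ?rest" for a
    by (rule prod.cong) auto
  then have "K (i[k := a]) j = M k a (j ! k) * ?rest" for a
    using K i j k by (simp add: product_op_def split[of "\<lambda>l. M l (i[k := a] ! l) (j ! l)"])
  moreover have "product_op (M(k := (\<lambda>r c. \<Sum>a<d. A r a * M k a c))) i j
      = (\<Sum>a<d. A (i ! k) a * M k a (j ! k)) * ?rest"
    unfolding product_op_def i split by simp
  ultimately show ?thesis
    by (simp add: apply_local_def sum_distrib_right mult.assoc)
qed

lemma locc_leaves_product_op:
  assumes "locc ds0 L" and "(ds, K) \<in> set L"
  shows "length ds = length ds0 \<and> is_product_op (length ds0) K"
  using assms
proof (induction arbitrary: ds K rule: locc.induct)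
  case init
  then show ?case
    by (simp add: is_product_op_id_op)
next
  case (refine L n ds' K' k d' As)
  have "(ds', K') \<in> set L"
    using refine.hyps(2,3) nth_mem by fastforce
  then have leaf: "length ds' = length ds0" "is_product_op (length ds0) K'"
    using refine.IH by blast+
  then obtain M where M: "\<forall>i j. length i = length ds0 \<longrightarrow> length j = length ds0 \<longrightarrow> K' i j = product_op M i j"
    unfolding is_product_op_def by blast
  have "is_product_op (length ds0) (apply_local k (ds' ! k) A K')" for A
    unfolding is_product_op_def
    using apply_local_product_op[OF M _ _ refine.hyps(4)[unfolded leaf(1)]] by blast
  moreover have "(ds, K) \<in> set L \<or> (ds = ds'[k := d'] \<and> (\<exists>A. K = apply_local k (ds' ! k) A K'))"
    using refine.prems by (auto dest: in_set_takeD in_set_dropD)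
  ultimately show ?case
    using refine.IH leaf by auto
qed

section \<open>Kraus families implementing SWAP\<close>

lemma sum_mult_cnj_eq_0_iff:
  assumes "finite T"
  shows "(\<Sum>n\<in>T. f n * cnj (f n)) = 0 \<longleftrightarrow> (\<forall>n\<in>T. f n = 0)"
proof -
  have "(\<Sum>n\<in>T. f n * cnj (f n)) = complex_of_real (\<Sum>n\<in>T. (cmod (f n))\<^sup>2)"
    by (simp only: of_real_sum complex_norm_square)
  also have "\<dots> = 0 \<longleftrightarrow> (\<forall>n\<in>T. (cmod (f n))\<^sup>2 = 0)"
    using assms by (simp only: of_real_eq_0_iff sum_nonneg_eq_0_iff zero_le_power2)
  finally show ?thesis
    by simp
qed

definition apply_kernel :: "(nat \<Rightarrow> nat \<Rightarrow> nat \<Rightarrow> nat \<Rightarrow> complex) \<Rightarrow> (nat \<Rightarrow> nat \<Rightarrow> complex) \<Rightarrow> nat \<Rightarrow> nat \<Rightarrow> complex" where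
  "apply_kernel g \<psi> r1 r2 = (\<Sum>q1<2. \<Sum>q2<2. \<psi> q1 q2 * g q1 q2 r1 r2)"

definition basis_state :: "nat \<Rightarrow> nat \<Rightarrow> nat \<Rightarrow> nat \<Rightarrow> complex" where
  "basis_state j m q1 q2 = (if q1 = j \<and> q2 = m then 1 else 0)"

text \<open>Amplitudes 3/5 and 4/5 give a normalised superposition without square roots.\<close>
definition superposed_state :: "nat \<Rightarrow> nat \<Rightarrow> nat \<Rightarrow> nat \<Rightarrow> complex" where
  "superposed_state j m q1 q2 =
     (if q1 = 0 \<and> q2 = 0 then 3 / 5 else if q1 = j \<and> q2 = m then 4 / 5 else 0)"

lemma basis_state_normalised: "j < 2 \<Longrightarrow> m < 2 \<Longrightarrow> (\<Sum>a<2. \<Sum>b<2. (cmod (basis_state j m a b))\<^sup>2) = 1"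
  by (auto simp: sum_lessThan_2 basis_state_def dest!: less_2_cases)

lemma apply_kernel_basis_state: "j < 2 \<Longrightarrow> m < 2 \<Longrightarrow> apply_kernel g (basis_state j m) r1 r2 = g j m r1 r2"
  by (auto simp: sum_lessThan_2 apply_kernel_def basis_state_def dest!: less_2_cases)

lemma superposed_state_normalised:
  "j < 2 \<Longrightarrow> m < 2 \<Longrightarrow> (j, m) \<noteq> (0, 0) \<Longrightarrow> (\<Sum>a<2. \<Sum>b<2. (cmod (superposed_state j m a b))\<^sup>2) = 1"
  by (auto simp: sum_lessThan_2 superposed_state_def norm_divide power_divide dest!: less_2_cases)

lemma apply_kernel_superposed_state:
  "j < 2 \<Longrightarrow> m < 2 \<Longrightarrow> (j, m) \<noteq> (0, 0) \<Longrightarrow>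
    apply_kernel g (superposed_state j m) r1 r2 = 3 / 5 * g 0 0 r1 r2 + 4 / 5 * g j m r1 r2"
  by (auto simp: sum_lessThan_2 apply_kernel_def superposed_state_def dest!: less_2_cases)

locale swap_kraus_family =
  fixes T :: "nat set" and p :: real and G :: "nat \<Rightarrow> nat \<Rightarrow> nat \<Rightarrow> nat \<Rightarrow> nat \<Rightarrow> complex"
  assumes finite_T: "finite T" and p_pos: "p > 0"
    and implements_swap: "\<And>\<psi> a1 a2 b1 b2. (\<Sum>a<2. \<Sum>b<2. (cmod (\<psi> a b))\<^sup>2) = 1 \<Longrightarrow>
      a1 < 2 \<Longrightarrow> a2 < 2 \<Longrightarrow> b1 < 2 \<Longrightarrow> b2 < 2 \<Longrightarrow>
      (\<Sum>n\<in>T. apply_kernel (G n) \<psi> a1 a2 * cnj (apply_kernel (G n) \<psi> b1 b2))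
        = complex_of_real p * \<psi> a2 a1 * cnj (\<psi> b2 b1)"
begin

lemma sum_branch_basis_state:
  assumes "j < 2" "m < 2" "r1 < 2" "r2 < 2"
  shows "(\<Sum>n\<in>T. G n j m r1 r2 * cnj (G n j m r1 r2)) = (if r1 = m \<and> r2 = j then complex_of_real p else 0)"
  using implements_swap[OF basis_state_normalised[OF assms(1,2)] assms(3,4,3,4)]
  unfolding apply_kernel_basis_state[OF assms(1,2)] by (simp add: basis_state_def)

lemma branch_eq_0_unless_swap:
  assumes "n \<in> T" "j < 2" "m < 2" "r1 < 2" "r2 < 2" "\<not> (r1 = m \<and> r2 = j)"
  shows "G n j m r1 r2 = 0"
  using sum_branch_basis_state[OF assms(2-5)] assms(1,6) sum_mult_cnj_eq_0_iff[OF finite_T]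
  by auto

lemma branch_swap_entries_equal:
  assumes n: "n \<in> T" and "j < 2" "m < 2" "(j, m) \<noteq> (0, 0)"
  shows "G n j m m j = G n 0 0 0 0"
proof -
  define c where "c n = G n 0 0 0 0" for n
  define d where "d n = G n j m m j" for n
  have cc: "(\<Sum>n\<in>T. c n * cnj (c n)) = p" and dd: "(\<Sum>n\<in>T. d n * cnj (d n)) = p"
    using sum_branch_basis_state[of 0 0 0 0] sum_branch_basis_state[of j m m j] assms
    by (simp_all add: c_def d_def)
  have out_00: "apply_kernel (G n) (superposed_state j m) 0 0 = 3 / 5 * c n"
    and out_mj: "apply_kernel (G n) (superposed_state j m) m j = 4 / 5 * d n" if "n \<in> T" for n
    using apply_kernel_superposed_state[OF assms(2-4)] branch_eq_0_unless_swap[OF that] assms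
    by (auto simp: c_def d_def)
  have "(\<Sum>n\<in>T. apply_kernel (G n) (superposed_state j m) 0 0
        * cnj (apply_kernel (G n) (superposed_state j m) m j))
      = (\<Sum>n\<in>T. 3 / 5 * c n * cnj (4 / 5 * d n))"
    by (rule sum.cong) (simp_all only: out_00 out_mj)
  moreover have "superposed_state j m 0 0 = 3 / 5" "superposed_state j m j m = 4 / 5"
    using assms by (auto simp: superposed_state_def)
  ultimately have "(\<Sum>n\<in>T. 3 / 5 * c n * cnj (4 / 5 * d n)) = complex_of_real p * (3 / 5) * cnj (4 / 5)"
    using implements_swap[OF superposed_state_normalised[OF assms(2-4)], of 0 0 m j] assms
    by simp
  then have "12 / 25 * (\<Sum>n\<in>T. c n * cnj (d n)) = 12 / 25 * p"
    by (simp add: sum_distrib_left mult_ac)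
  then have cd: "(\<Sum>n\<in>T. c n * cnj (d n)) = p"
    by simp
  have "(\<Sum>n\<in>T. d n * cnj (c n)) = cnj (\<Sum>n\<in>T. c n * cnj (d n))"
    by (simp add: mult.commute)
  with cd have dc: "(\<Sum>n\<in>T. d n * cnj (c n)) = p"
    by simp
  have "(\<Sum>n\<in>T. (c n - d n) * cnj (c n - d n))
      = (\<Sum>n\<in>T. c n * cnj (c n)) - (\<Sum>n\<in>T. c n * cnj (d n)) - (\<Sum>n\<in>T. d n * cnj (c n))
        + (\<Sum>n\<in>T. d n * cnj (d n))"
    by (simp add: algebra_simps sum.distrib sum_subtractf)
  also have "\<dots> = 0"
    by (simp add: cc cd dc dd)
  finally have "c n - d n = 0"
    using n sum_mult_cnj_eq_0_iff[OF finite_T, of "\<lambda>n. c n - d n"] by blast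
  then show ?thesis
    by (simp add: c_def d_def)
qed

lemma exists_branch_proportional_to_swap:
  "\<exists>n\<in>T. \<exists>lam. lam \<noteq> 0 \<and> (\<forall>q1<2. \<forall>q2<2. \<forall>r1<2. \<forall>r2<2.
     G n q1 q2 r1 r2 = (if r1 = q2 \<and> r2 = q1 then lam else 0))"
proof -
  have "(\<Sum>n\<in>T. G n 0 0 0 0 * cnj (G n 0 0 0 0)) \<noteq> 0"
    using sum_branch_basis_state[of 0 0 0 0] p_pos by simp
  then obtain n where n: "n \<in> T" and "G n 0 0 0 0 \<noteq> 0"
    using sum_mult_cnj_eq_0_iff[OF finite_T, of "\<lambda>n. G n 0 0 0 0"] by blast
  moreover have "G n q1 q2 r1 r2 = (if r1 = q2 \<and> r2 = q1 then G n 0 0 0 0 else 0)"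
    if "q1 < 2" "q2 < 2" "r1 < 2" "r2 < 2" for q1 q2 r1 r2
    using branch_eq_0_unless_swap[OF n that] branch_swap_entries_equal[OF n, of q1 q2] that
    by (cases "(q1, q2) = (0, 0)") auto
  ultimately show ?thesis
    by blast
qed

end

section \<open>The (2,2)-cluster network\<close>

lemma finite_idx: "finite (idx ds)"
proof (rule finite_subset)
  show "idx ds \<subseteq> {i. set i \<subseteq> {..<sum_list ds} \<and> length i = length ds}"
    by (auto simp: idx_def in_set_conv_nth) (meson elem_le_sum_list less_le_trans)
  show "finite {i. set i \<subseteq> {..<sum_list ds} \<and> length i = length ds}"
    by (rule finite_lists_length_eq) simp
qed

lemma all_less_4: "(\<forall>k<(4::nat). P k) \<longleftrightarrow> P 0 \<and> P 1 \<and> P 2 \<and> P 3"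
  by (auto simp: less_Suc_eq numeral_eq_Suc)

lemma length_4_conv: "length (i :: nat list) = 4 \<longleftrightarrow> (\<exists>a b c d. i = [a, b, c, d])"
  by (auto simp: numeral_eq_Suc length_Suc_conv)

lemma idx_cluster_dims:
  "i \<in> idx cluster_dims \<longleftrightarrow> length i = 4 \<and> i ! 0 < 8 \<and> i ! 1 < 8 \<and> i ! 2 < 4 \<and> i ! 3 < 4"
proof -
  have "length cluster_dims = 4"
    by (simp add: cluster_dims_def)
  then show ?thesis
    unfolding idx_def mem_Collect_eq \<open>length cluster_dims = 4\<close> all_less_4
    by (simp add: cluster_dims_def)
qed

definition bit_tuples :: "(nat \<times> nat \<times> nat \<times> nat \<times> nat \<times> nat) set" where
  "bit_tuples = {..<2} \<times> {..<2} \<times> {..<2} \<times> {..<2} \<times> {..<2} \<times> {..<2}"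

text \<open>q1, q2 are the input qubits and a, b, c, d the EPR bits on the edges v11-v21, v12-v22,
  v11-v12, v21-v22; the resource state is supported on these indices.\<close>
definition cluster_index :: "nat \<times> nat \<times> nat \<times> nat \<times> nat \<times> nat \<Rightarrow> nat list" where
  "cluster_index = (\<lambda>(q1, q2, a, b, c, d). [4 * q1 + 2 * a + c, 4 * q2 + 2 * a + d, 2 * b + c, 2 * b + d])"

definition cluster_bits :: "nat list \<Rightarrow> nat \<times> nat \<times> nat \<times> nat \<times> nat \<times> nat" where
  "cluster_bits i = (i ! 0 div 4, i ! 1 div 4, i ! 0 div 2 mod 2, i ! 2 div 2, i ! 0 mod 2, i ! 1 mod 2)"

lemma cluster_bits_cluster_index: "t \<in> bit_tuples \<Longrightarrow> cluster_bits (cluster_index t) = t"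
  by (auto simp: bit_tuples_def cluster_bits_def cluster_index_def dest!: less_2_cases)

lemma inj_on_cluster_index: "inj_on cluster_index bit_tuples"
  by (rule inj_on_inverseI[of _ cluster_bits]) (rule cluster_bits_cluster_index)

lemma cluster_index_in_idx: "t \<in> bit_tuples \<Longrightarrow> cluster_index t \<in> idx cluster_dims"
  by (auto simp: bit_tuples_def cluster_index_def idx_cluster_dims)

lemma nat_three_bit_decomposition: "4 * (j div 4) + 2 * (j div 2 mod 2) + j mod 2 = (j::nat)"
  using mod_mult2_eq[of j 2 2] div_mult_mod_eq[of j 4] by simp

lemma nth_4: "[w, x, y, z] ! 0 = w" "[w, x, y, z] ! 1 = x" "[w, x, y, z] ! 2 = y" "[w, x, y, z] ! 3 = z"
  by simp_all

lemma init_vec_cluster_index: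
  assumes "(q1, q2, a, b, c, d) \<in> bit_tuples"
  shows "init_vec \<psi> (cluster_index (q1, q2, a, b, c, d)) = \<psi> q1 q2 / 4"
proof -
  have bits: "(4 * q1 + 2 * a + c) div 4 = q1" "(4 * q2 + 2 * a + d) div 4 = q2"
    "(4 * q1 + 2 * a + c) div 2 mod 2 = a" "(4 * q2 + 2 * a + d) div 2 mod 2 = a"
    "(2 * b + c) div 2 = b" "(2 * b + d) div 2 = b"
    "(4 * q1 + 2 * a + c) mod 2 = c" "(2 * b + c) mod 2 = c"
    "(4 * q2 + 2 * a + d) mod 2 = d" "(2 * b + d) mod 2 = d"
    using assms by (auto simp: bit_tuples_def dest!: less_2_cases)
  have epr_diag: "epr n n = complex_of_real (1 / sqrt 2)" for n
    unfolding epr_def by (rule if_P) (rule refl)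
  have "complex_of_real (1 / sqrt 2) ^ 4 = complex_of_real ((1 / sqrt 2) ^ 4)"
    by (simp only: of_real_power)
  also have "(1 / sqrt 2) ^ 4 = (1 / 4 :: real)"
    by (simp add: power_divide power4_eq_xxxx flip: power2_eq_square)
  finally have quarter: "complex_of_real (1 / sqrt 2) ^ 4 = 1 / 4"
    by simp
  have "init_vec \<psi> (cluster_index (q1, q2, a, b, c, d))
      = \<psi> ((4 * q1 + 2 * a + c) div 4) ((4 * q2 + 2 * a + d) div 4)
        * epr ((4 * q1 + 2 * a + c) div 2 mod 2) ((4 * q2 + 2 * a + d) div 2 mod 2)
        * epr ((2 * b + c) div 2) ((2 * b + d) div 2)
        * epr ((4 * q1 + 2 * a + c) mod 2) ((2 * b + c) mod 2)
        * epr ((4 * q2 + 2 * a + d) mod 2) ((2 * b + d) mod 2)"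
    by (simp only: init_vec_def cluster_index_def prod.case nth_4)
  also have "\<dots> = \<psi> q1 q2 * complex_of_real (1 / sqrt 2) ^ 4"
    by (simp only: bits epr_diag power4_eq_xxxx mult.assoc)
  also have "\<dots> = \<psi> q1 q2 / 4"
    unfolding quarter by simp
  finally show ?thesis .
qed

lemma init_vec_support:
  assumes "i \<in> idx cluster_dims" and "init_vec \<psi> i \<noteq> 0"
  shows "i \<in> cluster_index ` bit_tuples"
proof -
  obtain j0 j1 j2 j3 where i: "i = [j0, j1, j2, j3]" and "j0 < 8" "j1 < 8" "j2 < 4" "j3 < 4"
    using assms(1) by (auto simp: idx_cluster_dims length_4_conv)
  then have "cluster_bits i \<in> bit_tuples"
    by (auto simp: cluster_bits_def bit_tuples_def)
  have "epr (j0 div 2 mod 2) (j1 div 2 mod 2) \<noteq> 0" "epr (j2 div 2) (j3 div 2) \<noteq> 0"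
    "epr (j0 mod 2) (j2 mod 2) \<noteq> 0" "epr (j1 mod 2) (j3 mod 2) \<noteq> 0"
    using assms(2) unfolding init_vec_def i nth_4 by auto
  then have a: "j0 div 2 mod 2 = j1 div 2 mod 2" and b: "j2 div 2 = j3 div 2"
    and c: "j0 mod 2 = j2 mod 2" and d: "j1 mod 2 = j3 mod 2"
    by (auto simp: epr_def split: if_splits)
  have "4 * (j0 div 4) + 2 * (j0 div 2 mod 2) + j0 mod 2 = j0"
    by (rule nat_three_bit_decomposition)
  moreover have "4 * (j1 div 4) + 2 * (j0 div 2 mod 2) + j1 mod 2 = j1"
    using a nat_three_bit_decomposition[of j1] by simp
  moreover have "2 * (j2 div 2) + j0 mod 2 = j2"
    using c div_mult_mod_eq[of j2 2] by simp
  moreover have "2 * (j2 div 2) + j1 mod 2 = j3"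
    using b d div_mult_mod_eq[of j3 2] by simp
  ultimately have "cluster_index (cluster_bits i) = i"
    by (simp only: cluster_index_def cluster_bits_def prod.case i nth_4)
  with \<open>cluster_bits i \<in> bit_tuples\<close> show ?thesis
    by (metis image_eqI)
qed

lemma product_op_4:
  "product_op M [i0, i1, i2, i3] [j0, j1, j2, j3] = M 0 i0 j0 * M 1 i1 j1 * M 2 i2 j2 * M 3 i3 j3"
  by (simp add: product_op_def lessThan_nat_numeral numeral_2_eq_2 numeral_3_eq_3 mult_ac)

text \<open>The ring v11 -a- v21 -d- v22 -b- v12 -c- v11 read at the output index [0, 0, r1, r2] (nodes
  v11 and v21 end one-dimensional); the factor 1/4 is the normalisation of the four EPR pairs.\<close>
definition cluster_kernel :: "(nat \<Rightarrow> lop) \<Rightarrow> nat \<Rightarrow> nat \<Rightarrow> nat \<Rightarrow> nat \<Rightarrow> complex" where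
  "cluster_kernel M q1 q2 r1 r2 =
     ring_contraction (\<lambda>q c a. M 0 0 (4 * q + 2 * a + c)) (\<lambda>q a d. M 1 0 (4 * q + 2 * a + d))
       (\<lambda>r d b. M 3 r (2 * b + d)) (\<lambda>r b c. M 2 r (2 * b + c)) q1 q2 r2 r1 / 4"

lemma apply_vec_product_op_init_vec:
  assumes K: "\<forall>i j. length i = 4 \<longrightarrow> length j = 4 \<longrightarrow> K i j = product_op M i j"
  shows "apply_vec cluster_dims K (init_vec \<psi>) [0, 0, r1, r2] = apply_kernel (cluster_kernel M) \<psi> r1 r2"
proof -
  let ?f = "\<lambda>i. product_op M [0, 0, r1, r2] i * init_vec \<psi> i"
  have "apply_vec cluster_dims K (init_vec \<psi>) [0, 0, r1, r2] = (\<Sum>i\<in>idx cluster_dims. ?f i)"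
    unfolding apply_vec_def by (rule sum.cong) (auto simp: idx_cluster_dims K)
  also have "\<dots> = (\<Sum>i\<in>cluster_index ` bit_tuples. ?f i)"
    by (rule sum.mono_neutral_right)
      (auto simp: finite_idx cluster_index_in_idx dest: init_vec_support)
  also have "\<dots> = (\<Sum>t\<in>bit_tuples. ?f (cluster_index t))"
    by (rule sum.reindex[OF inj_on_cluster_index, unfolded comp_def])
  also have "\<dots> = (\<Sum>(q1, q2, a, b, c, d)\<in>bit_tuples.
      M 0 0 (4 * q1 + 2 * a + c) * M 1 0 (4 * q2 + 2 * a + d) * M 2 r1 (2 * b + c) * M 3 r2 (2 * b + d)
      * (\<psi> q1 q2 / 4))"
  proof (rule sum.cong[OF refl], clarify)
    fix q1 q2 a b c d assume "(q1, q2, a, b, c, d) \<in> bit_tuples"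
    then show "?f (cluster_index (q1, q2, a, b, c, d)) =
      M 0 0 (4 * q1 + 2 * a + c) * M 1 0 (4 * q2 + 2 * a + d) * M 2 r1 (2 * b + c) * M 3 r2 (2 * b + d)
      * (\<psi> q1 q2 / 4)"
      by (simp only: init_vec_cluster_index) (simp add: cluster_index_def product_op_4)
  qed
  also have "\<dots> = (\<Sum>q1<2. \<Sum>q2<2. \<Sum>a<2. \<Sum>b<2. \<Sum>c<2. \<Sum>d<2.
      M 0 0 (4 * q1 + 2 * a + c) * M 1 0 (4 * q2 + 2 * a + d) * M 2 r1 (2 * b + c) * M 3 r2 (2 * b + d)
      * (\<psi> q1 q2 / 4))"
    by (simp add: bit_tuples_def sum.cartesian_product)
  also have "\<dots> = apply_kernel (cluster_kernel M) \<psi> r1 r2"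
    by (simp add: apply_kernel_def cluster_kernel_def ring_contraction_def sum_distrib_left
        sum_divide_distrib mult_ac)
  finally show ?thesis .
qed

lemma apply_U_SWAP: "a1 < 2 \<Longrightarrow> a2 < 2 \<Longrightarrow> apply_U U_SWAP \<psi> a1 a2 = \<psi> a2 a1"
  by (auto simp: apply_U_def sum_lessThan_2 U_SWAP_def dest!: less_2_cases)

lemma locc_cluster_leaf_amplitude:
  assumes "locc cluster_dims L" and "n < length L"
  obtains M where "\<And>\<psi> r1 r2.
    apply_vec cluster_dims (snd (L ! n)) (init_vec \<psi>) [0, 0, r1, r2] = apply_kernel (cluster_kernel M) \<psi> r1 r2"
proof -
  have "length cluster_dims = 4"
    by (simp add: cluster_dims_def)
  then have "is_product_op 4 (snd (L ! n))"
    using locc_leaves_product_op[OF assms(1), of "fst (L ! n)" "snd (L ! n)"] assms(2) by simp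
  then show ?thesis
    using apply_vec_product_op_init_vec that unfolding is_product_op_def by blast
qed

lemma cluster_kernel_not_swap:
  assumes "\<forall>q1<2. \<forall>q2<2. \<forall>r1<2. \<forall>r2<2.
    cluster_kernel M q1 q2 r1 r2 = (if r1 = q2 \<and> r2 = q1 then lam else 0)"
  shows "lam = 0"
proof -
  have "ring_contraction (\<lambda>q c a. M 0 0 (4 * q + 2 * a + c)) (\<lambda>q a d. M 1 0 (4 * q + 2 * a + d))
      (\<lambda>r d b. M 3 r (2 * b + d)) (\<lambda>r b c. M 2 r (2 * b + c)) j m k l = (if j = k \<and> m = l then 4 * lam else 0)"
    if "j < 2" "m < 2" "k < 2" "l < 2" for j m k l
  proof -
    have "cluster_kernel M j m l k = (if l = m \<and> k = j then lam else 0)"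
      using assms that by blast
    then show ?thesis
      unfolding cluster_kernel_def by (auto simp: divide_eq_eq)
  qed
  then have "4 * lam = 0"
    by (rule ring_contraction_not_swap)
  then show ?thesis
    by simp
qed

theorem mainTheorem7:
  shows "\<not> prob_implementable U_SWAP"
proof
  assume "prob_implementable U_SWAP"
  then obtain L T p where locc: "locc cluster_dims L" and T: "T \<subseteq> {..<length L}" and "p > 0"
    and implements: "\<forall>\<psi>. (\<Sum>a<2. \<Sum>b<2. (cmod (\<psi> a b))\<^sup>2) = 1 \<longrightarrow>
      (\<forall>a1<2. \<forall>a2<2. \<forall>b1<2. \<forall>b2<2.
        (\<Sum>n\<in>T. apply_vec cluster_dims (snd (L ! n)) (init_vec \<psi>) [0, 0, a1, a2]
           * cnj (apply_vec cluster_dims (snd (L ! n)) (init_vec \<psi>) [0, 0, b1, b2]))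
        = complex_of_real p * apply_U U_SWAP \<psi> a1 a2 * cnj (apply_U U_SWAP \<psi> b1 b2))"
    unfolding prob_implementable_def by blast
  have "\<forall>n\<in>T. \<exists>M. \<forall>\<psi> r1 r2.
      apply_vec cluster_dims (snd (L ! n)) (init_vec \<psi>) [0, 0, r1, r2] = apply_kernel (cluster_kernel M) \<psi> r1 r2"
    using locc_cluster_leaf_amplitude[OF locc] T by (metis lessThan_iff subsetD)
  then obtain M where amplitude: "\<And>n \<psi> r1 r2. n \<in> T \<Longrightarrow>
      apply_vec cluster_dims (snd (L ! n)) (init_vec \<psi>) [0, 0, r1, r2] = apply_kernel (cluster_kernel (M n)) \<psi> r1 r2"
    by metis
  have "swap_kraus_family T p (\<lambda>n. cluster_kernel (M n))"
    using T finite_subset \<open>p > 0\<close> implements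
    by unfold_locales (auto simp: amplitude apply_U_SWAP cong: sum.cong)
  then obtain n lam where "lam \<noteq> 0" and "\<forall>q1<2. \<forall>q2<2. \<forall>r1<2. \<forall>r2<2.
      cluster_kernel (M n) q1 q2 r1 r2 = (if r1 = q2 \<and> r2 = q1 then lam else 0)"
    using swap_kraus_family.exists_branch_proportional_to_swap by blast
  with cluster_kernel_not_swap show False
    by blast
qed

end
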